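(* Let $\mathcal{X}$ be either the closure of an open subset of $\mathbb{R}^d$ or an orientable smooth $d$-dimensional Riemannian manifold, with its geodesic distance $d_\mathcal{X}$. Let $G$ be a locally compact Lie group acting smoothly, properly and faithfully on $\mathcal{X}$, and let $U\subseteq G$ be a compact set with nonempty interior containing the identity. Fix $x\in\mathcal{X}$ and $h>0$, and let $\{g^i_{x,h}\}_{i=1}^m\subseteq U$ be the group elements produced by the construction described in the context. Then $$m\ \ge\ \max\Big(1,\ \big(R_x^{[x]_U}(2h)^{-1}\big)^{\dim [x]_U}\Big),$$ and $d_\mathcal{X}(g^i_{x,h}\cdot x,\ g^j_{x,h}\cdot x)\ge 2h$ whenever $i\neq j$.
   Context: Construction. Isometrically embed $\mathcal{X}$ in some $\mathbb{R}^q$, extend $d_\mathcal{X}$ by the Euclidean metric of $\mathbb{R}^q$, and regard all points of $\mathcal{X}$ and the tangent space $T_x[x]_U$ (as an affine subspace through $x$) via this embedding. Here $[x]_U=\{g\cdot x: g\in U\}$, a compact submanifold of the orbit $[x]_G=\{g\cdot x:g\in G\}$ of the same dimension. Let $W_x^{[x]_U}$ be the largest hypercube in $T_x[x]_U$ contained in the orthogonal projection of $[x]_U$ onto $T_x[x]_U$, and let $R_x^{[x]_U}$ be its side length; if the orbit is $0$-dimensional, set $R_x^{[x]_U}=1$. Then: (1) pick a maximal grid $\{a_i\}_{i=1}^m$ in $W_x^{[x]_U}$ with $d(a_i,a_j)\ge 2h$ for $i\ne j$; (2) orthogonally (with respect to $T_x[x]_U$) project this grid onto $[x]_U$, giving points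 $\{u_i\}_{i=1}^m\subseteq[x]_U$; (3) pick any $g^i_{x,h}\in U$ with $g^i_{x,h}\cdot x=u_i$. *)

theory Defs
  imports "HOL-Analysis.Analysis"
begin

text \<open>Orthogonal projection onto the affine subspace x + span {e j | j < k}
  (e an orthonormal family), i.e. onto the tangent space T_x[x]_U regarded as an
  affine subspace through x.\<close>
definition proj_aff :: "'a::euclidean_space \<Rightarrow> (nat \<Rightarrow> 'a) \<Rightarrow> nat \<Rightarrow> 'a \<Rightarrow> 'a" where
  "proj_aff x e k p = x + (\<Sum>j<k. ((p - x) \<bullet> e j) *\<^sub>R e j)"

definition hcube :: "'a::euclidean_space \<Rightarrow> (nat \<Rightarrow> 'a) \<Rightarrow> nat \<Rightarrow> real \<Rightarrow> 'a set" where
  "hcube c e k R = {c + (\<Sum>j<k. t j *\<^sub>R e j) | t. \<forall>j<k. 0 \<le> t j \<and> t j \<le> R}"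

definition grid_idx :: "nat \<Rightarrow> real \<Rightarrow> real \<Rightarrow> (nat \<Rightarrow> nat) set" where
  "grid_idx k R h = ({..<k} \<rightarrow>\<^sub>E {0..nat \<lfloor>R / (2 * h)\<rfloor>})"

definition grid_pt :: "'a::euclidean_space \<Rightarrow> (nat \<Rightarrow> 'a) \<Rightarrow> nat \<Rightarrow> real \<Rightarrow> (nat \<Rightarrow> nat) \<Rightarrow> 'a" where
  "grid_pt c e k h n = c + (\<Sum>j<k. (2 * h * real (n j)) *\<^sub>R e j)"

end

theory Submission
  imports Defs
begin

text \<open>The orthogonal projection onto the tangent space is 1-Lipschitz, and the grid points
  are at least 2h apart in the coordinates of the orthonormal frame; since the geodesic
  distance dominates the Euclidean one, the chosen orbit points are 2h-separated.
  The grid has (\<lfloor>R/2h\<rfloor> + 1)^k points, which is at least max(1, (R/2h)^k).\<close>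

lemma inner_sum_orthonormal:
  fixes e :: "nat \<Rightarrow> 'a::real_inner"
  assumes orth: "\<And>i j. i < k \<Longrightarrow> j < k \<Longrightarrow> e i \<bullet> e j = (if i = j then 1 else 0)"
  shows "(\<Sum>i<k. a i *\<^sub>R e i) \<bullet> (\<Sum>j<k. b j *\<^sub>R e j) = (\<Sum>i<k. a i * b i)"
proof -
  have "(\<Sum>i<k. a i *\<^sub>R e i) \<bullet> (\<Sum>j<k. b j *\<^sub>R e j)
      = (\<Sum>i<k. \<Sum>j<k. a i * b j * (e i \<bullet> e j))"
    by (simp add: inner_sum_left inner_sum_right sum_distrib_left ac_simps)
      (subst sum.swap, simp add: ac_simps)
  also have "\<dots> = (\<Sum>i<k. \<Sum>j<k. if i = j then a i * b j else 0)"
    by (intro sum.cong refl) (simp add: orth)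
  also have "\<dots> = (\<Sum>i<k. a i * b i)"
    by (intro sum.cong refl) (simp add: sum.delta)
  finally show ?thesis .
qed

lemma norm_orthonormal_projection_le:
  fixes v :: "'a::real_inner" and e :: "nat \<Rightarrow> 'a"
  assumes orth: "\<And>i j. i < k \<Longrightarrow> j < k \<Longrightarrow> e i \<bullet> e j = (if i = j then 1 else 0)"
  shows "norm (\<Sum>j<k. (v \<bullet> e j) *\<^sub>R e j) \<le> norm v"
proof -
  define w where "w = (\<Sum>j<k. (v \<bullet> e j) *\<^sub>R e j)"
  have "w \<bullet> w = (\<Sum>j<k. (v \<bullet> e j) * (v \<bullet> e j))"
    unfolding w_def by (rule inner_sum_orthonormal[OF orth])
  also have "\<dots> = v \<bullet> w"
    unfolding w_def by (simp add: inner_sum_right)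
  finally have "w \<bullet> w = v \<bullet> w" .
  then have "norm w * norm w \<le> norm v * norm w"
    using norm_cauchy_schwarz[of v w] by (simp add: power2_norm_eq_inner[symmetric] power2_eq_square)
  then show ?thesis
    unfolding w_def[symmetric] by (cases "norm w = 0") (auto simp: mult_le_cancel_right)
qed

lemma abs_coeff_le_norm_orthonormal_sum:
  fixes e :: "nat \<Rightarrow> 'a::real_inner"
  assumes orth: "\<And>i j. i < k \<Longrightarrow> j < k \<Longrightarrow> e i \<bullet> e j = (if i = j then 1 else 0)"
    and "i < k"
  shows "\<bar>a i\<bar> \<le> norm (\<Sum>j<k. a j *\<^sub>R e j)"
proof (rule power2_le_imp_le)
  have "\<bar>a i\<bar>\<^sup>2 \<le> (\<Sum>j<k. a j * a j)"
    using \<open>i < k\<close> member_le_sum[of i "{..<k}" "\<lambda>j. a j * a j"]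
    by (simp add: power2_eq_square)
  also have "\<dots> = (norm (\<Sum>j<k. a j *\<^sub>R e j))\<^sup>2"
    by (simp add: power2_norm_eq_inner inner_sum_orthonormal[OF orth])
  finally show "\<bar>a i\<bar>\<^sup>2 \<le> (norm (\<Sum>j<k. a j *\<^sub>R e j))\<^sup>2" .
qed simp

lemma dist_proj_aff_le:
  assumes orth: "\<And>i j. i < k \<Longrightarrow> j < k \<Longrightarrow> e i \<bullet> e j = (if i = j then 1 else 0)"
  shows "dist (proj_aff x e k p) (proj_aff x e k q) \<le> dist p q"
proof -
  have "proj_aff x e k p - proj_aff x e k q = (\<Sum>j<k. ((p - q) \<bullet> e j) *\<^sub>R e j)"
    unfolding proj_aff_def by (simp add: sum_subtractf[symmetric] inner_diff_left scaleR_diff_left)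
  then show ?thesis
    using norm_orthonormal_projection_le[OF orth] by (simp add: dist_norm)
qed

lemma dist_grid_pt_ge:
  assumes orth: "\<And>i j. i < k \<Longrightarrow> j < k \<Longrightarrow> e i \<bullet> e j = (if i = j then 1 else 0)"
    and "h > 0" and "i < k" and "n i \<noteq> n' i"
  shows "2 * h \<le> dist (grid_pt c e k h n) (grid_pt c e k h n')"
proof -
  define a where "a j = 2 * h * (real (n j) - real (n' j))" for j
  have "grid_pt c e k h n - grid_pt c e k h n' = (\<Sum>j<k. a j *\<^sub>R e j)"
    unfolding grid_pt_def a_def by (simp add: sum_subtractf[symmetric] algebra_simps)
  moreover have "2 * h \<le> \<bar>a i\<bar>"
  proof -
    have "1 \<le> \<bar>real (n i) - real (n' i)\<bar>"
      using \<open>n i \<noteq> n' i\<close> by linarith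
    then show ?thesis
      using \<open>h > 0\<close> by (simp add: a_def abs_mult)
  qed
  ultimately show ?thesis
    using abs_coeff_le_norm_orthonormal_sum[OF orth \<open>i < k\<close>, of a] by (simp add: dist_norm)
qed

lemma card_grid_idx: "card (grid_idx k R h) = (nat \<lfloor>R / (2 * h)\<rfloor> + 1) ^ k"
  unfolding grid_idx_def by (simp add: card_PiE)

lemma grid_idx_neq_imp_coord_neq:
  assumes "n \<in> grid_idx k R h" "n' \<in> grid_idx k R h" "n \<noteq> n'"
  obtains i where "i < k" "n i \<noteq> n' i"
  using assms unfolding grid_idx_def by (metis PiE_ext lessThan_iff)

lemma max_one_power_le_floor_succ_power:
  fixes r :: real
  assumes "0 \<le> r"
  shows "max 1 (r ^ k) \<le> (real (nat \<lfloor>r\<rfloor>) + 1) ^ k"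
proof -
  have "r \<le> real (nat \<lfloor>r\<rfloor>) + 1"
    using assms by linarith
  then have "r ^ k \<le> (real (nat \<lfloor>r\<rfloor>) + 1) ^ k"
    using assms by (intro power_mono) auto
  then show ?thesis
    by simp
qed

theorem proposition1:
  fixes X :: "'a::euclidean_space set"
    and dX :: "'a \<Rightarrow> 'a \<Rightarrow> real"
    and act :: "'g \<Rightarrow> 'a \<Rightarrow> 'a"
    and U :: "'g set"
    and x c :: 'a
    and e :: "nat \<Rightarrow> 'a"
    and k :: nat
    and h R :: real
    and g :: "(nat \<Rightarrow> nat) \<Rightarrow> 'g"
  assumes dX_ge: "\<And>p q. p \<in> X \<Longrightarrow> q \<in> X \<Longrightarrow> dist p q \<le> dX p q"
    and x_in: "x \<in> X"
    and act_in: "\<And>u. u \<in> U \<Longrightarrow> act u x \<in> X"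
    and orth: "\<And>i j. i < k \<Longrightarrow> j < k \<Longrightarrow> e i \<bullet> e j = (if i = j then 1 else 0)"
    and h_pos: "h > 0"
    and R_pos: "R > 0"
    and cube_in: "hcube c e k R \<subseteq> proj_aff x e k ` ((\<lambda>u. act u x) ` U)"
    and g_in: "\<And>n. n \<in> grid_idx k R h \<Longrightarrow> g n \<in> U"
    and g_proj: "\<And>n. n \<in> grid_idx k R h \<Longrightarrow>
                   proj_aff x e k (act (g n) x) = grid_pt c e k h n"
  shows "max 1 ((R / (2 * h)) ^ k) \<le> real (card (grid_idx k R h))
         \<and> (\<forall>n\<in>grid_idx k R h. \<forall>n'\<in>grid_idx k R h. n \<noteq> n' \<longrightarrow>
               2 * h \<le> dX (act (g n) x) (act (g n') x))"
  \<comment> \<open>cube_in only guarantees that g can be chosen; the proof does not need it.\<close>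
proof (intro conjI ballI impI)
  show "max 1 ((R / (2 * h)) ^ k) \<le> real (card (grid_idx k R h))"
    using max_one_power_le_floor_succ_power[of "R / (2 * h)" k] R_pos h_pos
    by (simp add: card_grid_idx add.commute)
next
  fix n n' assume n: "n \<in> grid_idx k R h" and n': "n' \<in> grid_idx k R h" and "n \<noteq> n'"
  then obtain i where "i < k" "n i \<noteq> n' i"
    by (rule grid_idx_neq_imp_coord_neq)
  with orth h_pos have "2 * h \<le> dist (grid_pt c e k h n) (grid_pt c e k h n')"
    by (rule dist_grid_pt_ge)
  also have "\<dots> \<le> dist (act (g n) x) (act (g n') x)"
    using dist_proj_aff_le[OF orth] by (simp add: g_proj[OF n, symmetric] g_proj[OF n', symmetric])
  also have "\<dots> \<le> dX (act (g n) x) (act (g n') x)"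
    using dX_ge act_in g_in n n' by blast
  finally show "2 * h \<le> dX (act (g n) x) (act (g n') x)" .
qed

end
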